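(* Let $G=\langle A\cup B\rangle$ be a CS group with $|X|\ge2$ whose rooted group $A$ is perfect and contains an element $a$ acting transitively on $X$. Then $G$ is not orbitwise-abelian, and for every generating set $S$ of $B$ the dynamical system $\Sigma_S$ is not eventually trivial; more precisely $A\subseteq\sigma_S(a,0)$, so $a\in\Sigma_S^k(\{a\})$ for all $k\ge1$.
   Context: Let $X$ be a nonempty set with distinguished letter $0$, $\dot X=X\setminus\{0\}$; $X^*$ is the free monoid on $X$ viewed as a rooted tree; $\mathrm{Aut}(X^* )$ acts on the right; sections are defined by $(u\star v).g=u.g\star v.(g|_u)$; elements of $\mathrm{Sym}(X)$ are rooted automorphisms; $\mathrm{St}(1)$ is the first layer stabiliser. A CS group is $G=\langle A\cup B\rangle$ with $A\le\mathrm{Sym}(X)$ transitive and $B\le\mathrm{St}(1)$ such that $b|_0=b$ for $b\in B$ and the $b|_x$ ($b\in B$, $x\in\dot X$) lie in $A$ and generate $A$. $\mathrm{st}_A(0)$ is the stabiliser of $0$; $\mathrm{orb}_c(0)$ the $\langle c\rangle$-orbit of $0$, $\ell_c(0)$ its length. $G$ is orbitwise-abelian if for every $a\in A$ the group $\langle b|_{0.c}:c\in\langle a\rangle\setminus\mathrm{st}_A(0),b\in B\rangle$ is abelian. $\mathrm{mp}_A(0,x)=\{c\in A:0.c=x\}$; $\mathfrak C(a,x)=\{cac^{-1}:c\in\mathrm{mp}_A(0,x)\}$; $\mathfrak X(a,x)=\bigcup_{c\in\mathfrak C(a,x)}\mathrm{orb}_c(0)\setminus\{0\}$. For $S\subseteq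 B$: $H_S(a,x)=\langle b|_y:y\in\mathfrak X(a,x),b\in S\rangle$, $\sigma_S(a,x)=\langle b|_{0.c}b|_{0.c^2}\cdots b|_{0.c^{\ell_c(0)-1}}:c\in\mathfrak C(a,x),b\in S\rangle\cdot H_S(a,x)'$ (derived subgroup), $\Sigma_S(P)=\bigcup_{a\in P}\bigcup_{x\in X}\sigma_S(a,x)$; eventually trivial: for every $a$ there is $n$ with $\Sigma_S^m(\{a\})\subseteq\{1_A\}$ for all $m>n$. *)

theory Defs
  imports "HOL-Algebra.Algebra"
begin

(* The alphabet X is the (finite) type 'x; words X^* are lists; tree automorphisms
   are length- and prefix-preserving bijections of 'x list.  Action is on the right,
   so the group product g \<otimes> h means "first g, then h", i.e. h \<circ> g. *)

definition tree_aut :: "('x list \<Rightarrow> 'x list) \<Rightarrow> bool" where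
  "tree_aut g \<longleftrightarrow> bij g \<and> (\<forall>u. length (g u) = length u)
     \<and> (\<forall>u v. take (length u) (g (u @ v)) = g u)"

definition AutT :: "('x list \<Rightarrow> 'x list) monoid" where
  "AutT = \<lparr>carrier = {g. tree_aut g}, monoid.mult = (\<lambda>g h. h \<circ> g), one = id\<rparr>"

(* section g|_u, defined by (u v).g = u.g (v.(g|_u)) *)
definition sect :: "('x list \<Rightarrow> 'x list) \<Rightarrow> 'x list \<Rightarrow> ('x list \<Rightarrow> 'x list)" where
  "sect g u = (\<lambda>v. drop (length u) (g (u @ v)))"

definition lact :: "'x \<Rightarrow> ('x list \<Rightarrow> 'x list) \<Rightarrow> 'x" where
  "lact x g = hd (g [x])"

(* rooted automorphisms = Sym(X) embedded in Aut(X^* ) *)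
definition rooted :: "('x list \<Rightarrow> 'x list) \<Rightarrow> bool" where
  "rooted g \<longleftrightarrow> tree_aut g \<and> (\<forall>x w. g (x # w) = lact x g # w)"

definition St1 :: "('x list \<Rightarrow> 'x list) set" where
  "St1 = {g. tree_aut g \<and> (\<forall>x. g [x] = [x])}"

definition CS_group :: "'x \<Rightarrow> ('x list \<Rightarrow> 'x list) set \<Rightarrow> ('x list \<Rightarrow> 'x list) set \<Rightarrow> bool" where
  "CS_group x0 A B \<longleftrightarrow>
     subgroup A AutT \<and> (\<forall>g\<in>A. rooted g) \<and> (\<forall>x y. \<exists>c\<in>A. lact x c = y) \<and>
     subgroup B AutT \<and> B \<subseteq> St1 \<and>
     (\<forall>b\<in>B. sect b [x0] = b) \<and>
     (\<forall>b\<in>B. \<forall>x. x \<noteq> x0 \<longrightarrow> sect b [x] \<in> A) \<and>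
     generate AutT {sect b [x] | b x. b \<in> B \<and> x \<noteq> x0} = A"

definition stA :: "'x \<Rightarrow> ('x list \<Rightarrow> 'x list) set \<Rightarrow> ('x list \<Rightarrow> 'x list) set" where
  "stA x0 A = {c \<in> A. lact x0 c = x0}"

definition orb :: "('x list \<Rightarrow> 'x list) \<Rightarrow> 'x \<Rightarrow> 'x set" where
  "orb c x0 = {lact x0 (c [^]\<^bsub>AutT\<^esub> (n::int)) | n. True}"

definition ell :: "('x list \<Rightarrow> 'x list) \<Rightarrow> 'x \<Rightarrow> nat" where
  "ell c x0 = card (orb c x0)"

definition orbitwise_abelian :: "'x \<Rightarrow> ('x list \<Rightarrow> 'x list) set \<Rightarrow> ('x list \<Rightarrow> 'x list) set \<Rightarrow> bool" where
  "orbitwise_abelian x0 A B \<longleftrightarrow>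
     (\<forall>a\<in>A. let K = generate AutT {sect b [lact x0 c] | b c.
                  c \<in> generate AutT {a} - stA x0 A \<and> b \<in> B}
             in \<forall>g\<in>K. \<forall>h\<in>K. g \<otimes>\<^bsub>AutT\<^esub> h = h \<otimes>\<^bsub>AutT\<^esub> g)"

definition mpA :: "'x \<Rightarrow> ('x list \<Rightarrow> 'x list) set \<Rightarrow> 'x \<Rightarrow> ('x list \<Rightarrow> 'x list) set" where
  "mpA x0 A x = {c \<in> A. lact x0 c = x}"

definition Cset :: "'x \<Rightarrow> ('x list \<Rightarrow> 'x list) set \<Rightarrow> ('x list \<Rightarrow> 'x list) \<Rightarrow> 'x \<Rightarrow> ('x list \<Rightarrow> 'x list) set" where
  "Cset x0 A a x = {c \<otimes>\<^bsub>AutT\<^esub> a \<otimes>\<^bsub>AutT\<^esub> inv\<^bsub>AutT\<^esub> c | c. c \<in> mpA x0 A x}"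

definition Xset :: "'x \<Rightarrow> ('x list \<Rightarrow> 'x list) set \<Rightarrow> ('x list \<Rightarrow> 'x list) \<Rightarrow> 'x \<Rightarrow> 'x set" where
  "Xset x0 A a x = (\<Union>c\<in>Cset x0 A a x. orb c x0 - {x0})"

definition HS :: "'x \<Rightarrow> ('x list \<Rightarrow> 'x list) set \<Rightarrow> ('x list \<Rightarrow> 'x list) set \<Rightarrow> ('x list \<Rightarrow> 'x list) \<Rightarrow> 'x \<Rightarrow> ('x list \<Rightarrow> 'x list) set" where
  "HS x0 A S a x = generate AutT {sect b [y] | y b. y \<in> Xset x0 A a x \<and> b \<in> S}"

definition orbprod :: "'x \<Rightarrow> ('x list \<Rightarrow> 'x list) \<Rightarrow> ('x list \<Rightarrow> 'x list) \<Rightarrow> ('x list \<Rightarrow> 'x list)" where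
  "orbprod x0 c b = foldl (\<lambda>acc i. acc \<otimes>\<^bsub>AutT\<^esub> sect b [lact x0 (c [^]\<^bsub>AutT\<^esub> (i::nat))])
                      \<one>\<^bsub>AutT\<^esub> [1..<ell c x0]"

definition sigmaS :: "'x \<Rightarrow> ('x list \<Rightarrow> 'x list) set \<Rightarrow> ('x list \<Rightarrow> 'x list) set \<Rightarrow> ('x list \<Rightarrow> 'x list) \<Rightarrow> 'x \<Rightarrow> ('x list \<Rightarrow> 'x list) set" where
  "sigmaS x0 A S a x =
     generate AutT {orbprod x0 c b | c b. c \<in> Cset x0 A a x \<and> b \<in> S}
       <#>\<^bsub>AutT\<^esub> derived AutT (HS x0 A S a x)"

definition SigmaS :: "'x \<Rightarrow> ('x list \<Rightarrow> 'x list) set \<Rightarrow> ('x list \<Rightarrow> 'x list) set \<Rightarrow> ('x list \<Rightarrow> 'x list) set \<Rightarrow> ('x list \<Rightarrow> 'x list) set" where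
  "SigmaS x0 A S P = (\<Union>a\<in>P. \<Union>x. sigmaS x0 A S a x)"

definition eventually_trivial :: "'x \<Rightarrow> ('x list \<Rightarrow> 'x list) set \<Rightarrow> ('x list \<Rightarrow> 'x list) set \<Rightarrow> bool" where
  "eventually_trivial x0 A S \<longleftrightarrow>
     (\<forall>a\<in>A. \<exists>n. \<forall>m>n. (SigmaS x0 A S ^^ m) {a} \<subseteq> {\<one>\<^bsub>AutT\<^esub>})"

end

theory Submission
  imports Defs
begin

text \<open>Since the powers of the transitive element \<open>a\<close> move \<open>0\<close> to every letter, the letters
  \<open>0.c\<close> with \<open>c \<in> \<langle>a\<rangle> \<setminus> st\<^sub>A(0)\<close> are exactly the nontrivial letters, so the group in the
  definition of orbitwise-abelian is generated by all sections \<open>b|\<^sub>x\<close> (\<open>x \<noteq> 0\<close>), i.e. it is \<open>A\<close>;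
  a nontrivial perfect group is not abelian. Likewise \<open>1 \<in> mp\<^sub>A(0,0)\<close> puts \<open>a\<close> itself into
  \<open>C(a,0)\<close>, so \<open>X(a,0)\<close> contains all nontrivial letters. Sectioning at a fixed letter is a
  homomorphism on \<open>St(1)\<close>, so the sections of a generating set \<open>S\<close> of \<open>B\<close> still generate \<open>A\<close>;
  hence \<open>H\<^sub>S(a,0) = A\<close> and \<open>\<sigma>\<^sub>S(a,0) \<supseteq> H\<^sub>S(a,0)' = A' = A\<close>. In particular the nontrivial element
  \<open>a\<close> survives every iterate of \<open>\<Sigma>\<^sub>S\<close>.\<close>

lemma tree_aut_comp: "tree_aut g \<Longrightarrow> tree_aut h \<Longrightarrow> tree_aut (h \<circ> g)"
  unfolding tree_aut_def
proof (intro conjI allI)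
  assume g: "bij g \<and> (\<forall>u. length (g u) = length u) \<and> (\<forall>u v. take (length u) (g (u @ v)) = g u)"
    and h: "bij h \<and> (\<forall>u. length (h u) = length u) \<and> (\<forall>u v. take (length u) (h (u @ v)) = h u)"
  show "bij (h \<circ> g)" using g h bij_comp by blast
  fix u show "length ((h \<circ> g) u) = length u" using g h by simp
  fix v
  have split: "g (u @ v) = g u @ drop (length u) (g (u @ v))"
    using g by (metis append_take_drop_id)
  have "take (length (g u)) (h (g u @ drop (length u) (g (u @ v)))) = h (g u)" using h by blast
  then show "take (length u) ((h \<circ> g) (u @ v)) = (h \<circ> g) u" using g split by (metis comp_apply)
qed

lemma tree_aut_inv: "tree_aut g \<Longrightarrow> tree_aut (Hilbert_Choice.inv g)"
  unfolding tree_aut_def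
proof (intro conjI allI)
  assume g: "bij g \<and> (\<forall>u. length (g u) = length u) \<and> (\<forall>u v. take (length u) (g (u @ v)) = g u)"
  show "bij (Hilbert_Choice.inv g)" using g bij_imp_bij_inv by blast
  fix u show "length (Hilbert_Choice.inv g u) = length u" using g by (metis bij_inv_eq_iff)
  fix v
  define w where "w = Hilbert_Choice.inv g (u @ v)"
  have gw: "g w = u @ v" using g unfolding w_def by (meson bij_inv_eq_iff)
  have lw: "length w = length u + length v" using g gw by (metis length_append)
  have "g (take (length u) w) = take (length (take (length u) w)) (g (take (length u) w @ drop (length u) w))"
    using g by metis
  also have "\<dots> = u" using gw lw by simp
  finally show "take (length u) (Hilbert_Choice.inv g (u @ v)) = Hilbert_Choice.inv g u"
    unfolding w_def[symmetric] using g by (metis bij_inv_eq_iff)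
qed

lemma tree_aut_id: "tree_aut id"
  unfolding tree_aut_def by simp

lemma AutT_mult: "g \<otimes>\<^bsub>AutT\<^esub> h = h \<circ> g"
  by (simp add: AutT_def)

lemma AutT_one: "\<one>\<^bsub>AutT\<^esub> = id"
  by (simp add: AutT_def)

lemma AutT_carrier: "carrier AutT = {g. tree_aut g}"
  by (simp add: AutT_def)

lemma group_AutT: "group AutT"
proof (rule groupI)
  show "\<And>g h. g \<in> carrier AutT \<Longrightarrow> h \<in> carrier AutT \<Longrightarrow> g \<otimes>\<^bsub>AutT\<^esub> h \<in> carrier AutT"
    by (simp add: AutT_carrier AutT_mult tree_aut_comp)
  show "\<one>\<^bsub>AutT\<^esub> \<in> carrier AutT" by (simp add: AutT_carrier AutT_one tree_aut_id)
  show "\<And>f g h. f \<in> carrier AutT \<Longrightarrow> g \<in> carrier AutT \<Longrightarrow> h \<in> carrier AutT \<Longrightarrow>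
    f \<otimes>\<^bsub>AutT\<^esub> g \<otimes>\<^bsub>AutT\<^esub> h = f \<otimes>\<^bsub>AutT\<^esub> (g \<otimes>\<^bsub>AutT\<^esub> h)"
    by (simp add: AutT_mult comp_assoc)
  show "\<And>g. g \<in> carrier AutT \<Longrightarrow> \<one>\<^bsub>AutT\<^esub> \<otimes>\<^bsub>AutT\<^esub> g = g" by (simp add: AutT_mult AutT_one)
  fix g assume "g \<in> carrier AutT"
  then have g: "tree_aut g" by (simp add: AutT_carrier)
  then have "surj g" unfolding tree_aut_def using bij_is_surj by blast
  then have "Hilbert_Choice.inv g \<otimes>\<^bsub>AutT\<^esub> g = \<one>\<^bsub>AutT\<^esub>" unfolding AutT_mult AutT_one surj_iff .
  moreover have "Hilbert_Choice.inv g \<in> carrier AutT" using g by (simp add: AutT_carrier tree_aut_inv)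
  ultimately show "\<exists>h\<in>carrier AutT. h \<otimes>\<^bsub>AutT\<^esub> g = \<one>\<^bsub>AutT\<^esub>" by blast
qed

interpretation AutT: group AutT
  by (rule group_AutT)

lemma AutT_inv:
  assumes "tree_aut g"
  shows "inv\<^bsub>AutT\<^esub> g = Hilbert_Choice.inv g"
proof (rule AutT.inv_equality)
  have "surj g" using assms unfolding tree_aut_def using bij_is_surj by blast
  then show "Hilbert_Choice.inv g \<otimes>\<^bsub>AutT\<^esub> g = \<one>\<^bsub>AutT\<^esub>"
    unfolding AutT_mult AutT_one surj_iff .
  show "g \<in> carrier AutT" using assms by (simp add: AutT_carrier)
  show "Hilbert_Choice.inv g \<in> carrier AutT" using assms tree_aut_inv by (simp add: AutT_carrier)
qed

lemma lact_id: "lact x id = x"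
  by (simp add: lact_def)

lemma St1_Cons:
  assumes "b \<in> St1"
  shows "b (y # v) = y # sect b [y] v"
proof -
  have b: "tree_aut b" "b [y] = [y]" using assms by (auto simp: St1_def)
  have "take (length [y]) (b ([y] @ v)) = b [y]" using b(1) unfolding tree_aut_def by blast
  then have "take 1 (b (y # v)) = [y]" using b(2) by simp
  then have "b (y # v) = y # drop 1 (b (y # v))" by (metis append_take_drop_id append_Cons append_Nil)
  then show ?thesis unfolding sect_def by simp
qed

lemma tree_aut_sect_St1:
  assumes "b \<in> St1"
  shows "tree_aut (sect b [y])"
  unfolding tree_aut_def bij_def
proof (intro conjI allI)
  have b: "bij b" "\<And>u. length (b u) = length u" "\<And>u v. take (length u) (b (u @ v)) = b u"
    using assms by (auto simp: St1_def tree_aut_def)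
  have cons: "\<And>z v. b (z # v) = z # sect b [z] v" using St1_Cons[OF assms] .
  show "inj (sect b [y])"
    by (rule injI) (metis cons b(1) bij_is_inj injD list.inject)
  have "w \<in> range (sect b [y])" for w
  proof -
    obtain u where u: "b u = y # w" using b(1) by (metis bij_is_surj surj_f_inv_f)
    then obtain z v where "u = z # v" using b(2) by (metis length_0_conv list.distinct(1) neq_Nil_conv)
    then show ?thesis using u cons by auto
  qed
  then show "surj (sect b [y])" by blast
  fix u
  show "length (sect b [y] u) = length u" using b(2)[of "y # u"] cons by simp
  fix v
  have "take (length (y # u)) (b ((y # u) @ v)) = b (y # u)" by (rule b(3))
  then show "take (length u) (sect b [y] (u @ v)) = sect b [y] u" using cons by simp
qed

lemma subgroup_St1: "subgroup St1 AutT"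
proof (rule AutT.subgroupI)
  show "St1 \<subseteq> carrier AutT" by (auto simp: St1_def AutT_carrier)
  show "St1 \<noteq> {}" using tree_aut_id by (auto simp: St1_def)
  show "g \<otimes>\<^bsub>AutT\<^esub> h \<in> St1" if "g \<in> St1" "h \<in> St1" for g h
    using that by (auto simp: St1_def AutT_mult tree_aut_comp)
  show "inv\<^bsub>AutT\<^esub> g \<in> St1" if g: "g \<in> St1" for g
  proof -
    have "bij g" "\<And>x. g [x] = [x]" using g by (auto simp: St1_def tree_aut_def)
    then have "Hilbert_Choice.inv g [x] = [x]" for x by (metis bij_inv_eq_iff)
    then show ?thesis using g by (auto simp: St1_def AutT_inv tree_aut_inv)
  qed
qed

lemma sect_one: "sect \<one>\<^bsub>AutT\<^esub> [y] = \<one>\<^bsub>AutT\<^esub>"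
  by (auto simp: AutT_one sect_def fun_eq_iff)

lemma sect_mult_St1:
  assumes "g \<in> St1" "h \<in> St1"
  shows "sect (g \<otimes>\<^bsub>AutT\<^esub> h) [y] = sect g [y] \<otimes>\<^bsub>AutT\<^esub> sect h [y]"
proof -
  have "(h \<circ> g) (y # v) = y # sect h [y] (sect g [y] v)" for v
    using St1_Cons[OF assms(1)] St1_Cons[OF assms(2)] by simp
  then show ?thesis unfolding AutT_mult by (auto simp: fun_eq_iff sect_def)
qed

lemma sect_inv_St1:
  assumes b: "b \<in> St1"
  shows "sect (inv\<^bsub>AutT\<^esub> b) [y] = inv\<^bsub>AutT\<^esub> (sect b [y])"
proof (rule AutT.inv_equality[symmetric])
  have b': "inv\<^bsub>AutT\<^esub> b \<in> St1" using b subgroup.m_inv_closed[OF subgroup_St1] by blast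
  have "b \<in> carrier AutT" using b subgroup.subset[OF subgroup_St1] by blast
  then have "sect (inv\<^bsub>AutT\<^esub> b \<otimes>\<^bsub>AutT\<^esub> b) [y] = \<one>\<^bsub>AutT\<^esub>"
    by (simp add: sect_one)
  then show "sect (inv\<^bsub>AutT\<^esub> b) [y] \<otimes>\<^bsub>AutT\<^esub> sect b [y] = \<one>\<^bsub>AutT\<^esub>"
    using sect_mult_St1[OF b' b] by simp
  show "sect b [y] \<in> carrier AutT" "sect (inv\<^bsub>AutT\<^esub> b) [y] \<in> carrier AutT"
    using b b' tree_aut_sect_St1 by (simp_all add: AutT_carrier)
qed

lemma sect_generate:
  assumes S: "S \<subseteq> St1" and b: "b \<in> generate AutT S"
  shows "sect b [y] \<in> generate AutT ((\<lambda>b. sect b [y]) ` S)"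
  using b
proof (induction rule: generate.induct)
  case one
  show ?case unfolding sect_one by (rule generate.one)
next
  case (incl h)
  then have "sect h [y] \<in> (\<lambda>b. sect b [y]) ` S" by (rule imageI)
  then show ?case by (rule generate.incl)
next
  case (inv h)
  have "sect h [y] \<in> (\<lambda>b. sect b [y]) ` S" using inv by (rule imageI)
  then show ?case unfolding sect_inv_St1[OF subsetD[OF S inv]] by (rule generate.inv)
next
  case (eng g h)
  have St: "generate AutT S \<subseteq> St1"
    using AutT.generate_subgroup_incl[OF S subgroup_St1] .
  show ?case
    unfolding sect_mult_St1[OF subsetD[OF St eng.hyps(1)] subsetD[OF St eng.hyps(2)]]
    using eng.IH by (rule generate.eng)
qed

lemma (in group) commutative_perfect_subgroup_trivial:
  assumes "subgroup H G" "derived G H = H" "\<And>g h. g \<in> H \<Longrightarrow> h \<in> H \<Longrightarrow> g \<otimes> h = h \<otimes> g"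
  shows "H = {\<one>}"
proof -
  interpret H: comm_group "G\<lparr>carrier := H\<rparr>"
    by (rule group.group_comm_groupI[OF subgroup_imp_group[OF assms(1)]]) (simp add: assms(3))
  have "derived G H = derived (G\<lparr>carrier := H\<rparr>) H"
    using derived_consistent[OF subset_refl assms(1)] by simp
  then show ?thesis using H.derived_eq_singleton assms(2) by simp
qed

lemma CS_group_sections_generate:
  assumes cs: "CS_group x0 A B" and gen: "generate AutT S = B"
  shows "generate AutT {sect b [y] | y b. y \<noteq> x0 \<and> b \<in> S} = A" (is "generate AutT ?T = A")
proof
  have A: "subgroup A AutT" and BSt: "B \<subseteq> St1"
    and sectA: "\<forall>b\<in>B. \<forall>x. x \<noteq> x0 \<longrightarrow> sect b [x] \<in> A"
    and genA: "generate AutT {sect b [x] | b x. b \<in> B \<and> x \<noteq> x0} = A"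
    using cs unfolding CS_group_def by simp_all
  have SB: "S \<subseteq> B" unfolding gen[symmetric] by (rule subsetI, rule generate.incl)
  have TA: "?T \<subseteq> A" using SB sectA by auto
  then show "generate AutT ?T \<subseteq> A" using A by (rule AutT.generate_subgroup_incl)
  have "sect b [x] \<in> generate AutT ?T" if "b \<in> B" "x \<noteq> x0" for b x
  proof -
    have "sect b [x] \<in> generate AutT ((\<lambda>b. sect b [x]) ` S)"
      using sect_generate[OF subset_trans[OF SB BSt]] that(1) gen by simp
    moreover have "(\<lambda>b. sect b [x]) ` S \<subseteq> ?T" using that(2) by auto
    ultimately show ?thesis using AutT.mono_generate by (meson subsetD)
  qed
  then have "{sect b [x] | b x. b \<in> B \<and> x \<noteq> x0} \<subseteq> generate AutT ?T" by auto
  moreover have "subgroup (generate AutT ?T) AutT"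
    using TA subgroup.subset[OF A] by (intro AutT.generate_is_subgroup) simp
  ultimately show "A \<subseteq> generate AutT ?T" unfolding genA[symmetric] by (rule AutT.generate_subgroup_incl)
qed

lemma transitive_element_ne_one:
  assumes card: "card (UNIV :: 'x set) \<ge> 2"
    and trans: "\<forall>y. \<exists>n::int. lact (x0 :: 'x) (a [^]\<^bsub>AutT\<^esub> n) = y"
  shows "a \<noteq> \<one>\<^bsub>AutT\<^esub>"
proof
  assume a: "a = \<one>\<^bsub>AutT\<^esub>"
  obtain y where "y \<noteq> x0"
  proof -
    have "UNIV \<noteq> {x0}"
    proof
      assume "UNIV = {x0}"
      then have "card (UNIV :: 'x set) = card {x0}" by (rule arg_cong)
      then show False using card by simp
    qed
    then show thesis using that by blast
  qed
  moreover obtain n :: int where "lact x0 (a [^]\<^bsub>AutT\<^esub> n) = y" using trans by blast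
  moreover have "a [^]\<^bsub>AutT\<^esub> n = id" by (simp add: a flip: AutT_one)
  ultimately show False by (simp add: lact_id)
qed

lemma lact_cyclic_nonstabiliser:
  assumes A: "subgroup A AutT" and a: "a \<in> A"
    and trans: "\<forall>y. \<exists>n::int. lact x0 (a [^]\<^bsub>AutT\<^esub> n) = y"
  shows "{lact x0 c | c. c \<in> generate AutT {a} - stA x0 A} = UNIV - {x0}"
proof (intro equalityI subsetI)
  have cyclic: "generate AutT {a} = {a [^]\<^bsub>AutT\<^esub> (k::int) | k. k \<in> UNIV}"
    using AutT.generate_pow a subgroup.subset[OF A] by blast
  fix x
  show "x \<in> UNIV - {x0}" if "x \<in> {lact x0 c | c. c \<in> generate AutT {a} - stA x0 A}"
    using that AutT.subgroup_int_pow_closed[OF A a] unfolding cyclic stA_def by auto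
  show "x \<in> {lact x0 c | c. c \<in> generate AutT {a} - stA x0 A}" if "x \<in> UNIV - {x0}"
  proof -
    obtain n :: int where n: "lact x0 (a [^]\<^bsub>AutT\<^esub> n) = x" using trans by blast
    then have "a [^]\<^bsub>AutT\<^esub> n \<in> generate AutT {a} - stA x0 A"
      using that unfolding cyclic stA_def by auto
    then show ?thesis using n by blast
  qed
qed

lemma not_orbitwise_abelian:
  assumes cs: "CS_group x0 A B" and perfect: "derived AutT A = A"
    and a: "a \<in> A" "a \<noteq> \<one>\<^bsub>AutT\<^esub>"
    and trans: "\<forall>y. \<exists>n::int. lact x0 (a [^]\<^bsub>AutT\<^esub> n) = y"
  shows "\<not> orbitwise_abelian x0 A B"
proof
  have A: "subgroup A AutT"
    and genA: "generate AutT {sect b [x] | b x. b \<in> B \<and> x \<noteq> x0} = A"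
    using cs unfolding CS_group_def by simp_all
  define C where "C = generate AutT {a} - stA x0 A"
  have "{sect b [lact x0 c] | b c. c \<in> C \<and> b \<in> B}
      = {sect b [x] | b x. b \<in> B \<and> x \<in> {lact x0 c | c. c \<in> C}}"
    by blast
  also have "\<dots> = {sect b [x] | b x. b \<in> B \<and> x \<noteq> x0}"
    unfolding C_def lact_cyclic_nonstabiliser[OF A a(1) trans] by simp
  finally have K: "generate AutT {sect b [lact x0 c] | b c. c \<in> C \<and> b \<in> B} = A"
    using genA by simp
  assume "orbitwise_abelian x0 A B"
  then have "\<forall>g\<in>generate AutT {sect b [lact x0 c] | b c. c \<in> C \<and> b \<in> B}.
      \<forall>h\<in>generate AutT {sect b [lact x0 c] | b c. c \<in> C \<and> b \<in> B}.
        g \<otimes>\<^bsub>AutT\<^esub> h = h \<otimes>\<^bsub>AutT\<^esub> g"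
    using a(1) unfolding orbitwise_abelian_def Let_def C_def by (rule bspec)
  then have "g \<otimes>\<^bsub>AutT\<^esub> h = h \<otimes>\<^bsub>AutT\<^esub> g" if "g \<in> A" "h \<in> A" for g h
    using that unfolding K by blast
  then have "A = {\<one>\<^bsub>AutT\<^esub>}" by (rule AutT.commutative_perfect_subgroup_trivial[OF A perfect])
  then show False using a by simp
qed

lemma Xset_self_transitive:
  assumes A: "subgroup A AutT" and a: "a \<in> A"
    and trans: "\<forall>y. \<exists>n::int. lact x0 (a [^]\<^bsub>AutT\<^esub> n) = y"
  shows "Xset x0 A a x0 = UNIV - {x0}"
proof -
  have "\<one>\<^bsub>AutT\<^esub> \<in> mpA x0 A x0"
    using subgroup.one_closed[OF A] by (simp add: mpA_def AutT_one lact_id)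
  moreover have "a = \<one>\<^bsub>AutT\<^esub> \<otimes>\<^bsub>AutT\<^esub> a \<otimes>\<^bsub>AutT\<^esub> inv\<^bsub>AutT\<^esub> \<one>\<^bsub>AutT\<^esub>"
    using a subgroup.subset[OF A] by auto
  ultimately have "a \<in> Cset x0 A a x0" unfolding Cset_def by blast
  moreover have "x \<in> orb a x0" for x
  proof -
    obtain n :: int where "lact x0 (a [^]\<^bsub>AutT\<^esub> n) = x" using trans by blast
    then show ?thesis unfolding orb_def by blast
  qed
  ultimately show ?thesis unfolding Xset_def by blast
qed

lemma HS_self_transitive:
  assumes cs: "CS_group x0 A B" and gen: "generate AutT S = B" and a: "a \<in> A"
    and trans: "\<forall>y. \<exists>n::int. lact x0 (a [^]\<^bsub>AutT\<^esub> n) = y"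
  shows "HS x0 A S a x0 = A"
proof -
  have "subgroup A AutT" using cs by (simp add: CS_group_def)
  then have "Xset x0 A a x0 = UNIV - {x0}" using a trans by (rule Xset_self_transitive)
  then show ?thesis
    using CS_group_sections_generate[OF cs gen] unfolding HS_def by simp
qed

lemma derived_HS_subset_sigmaS: "derived AutT (HS x0 A S a x) \<subseteq> sigmaS x0 A S a x"
proof
  fix g assume "g \<in> derived AutT (HS x0 A S a x)"
  moreover have "g = \<one>\<^bsub>AutT\<^esub> \<otimes>\<^bsub>AutT\<^esub> g" by (simp add: AutT_mult AutT_one)
  ultimately show "g \<in> sigmaS x0 A S a x"
    unfolding sigmaS_def set_mult_def using generate.one by blast
qed

lemma mem_SigmaS_iterate:
  assumes "a \<in> sigmaS x0 A S a x"
  shows "a \<in> (SigmaS x0 A S ^^ k) {a}"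
  by (induction k) (use assms in \<open>auto simp: SigmaS_def\<close>)

lemma recurrent_not_eventually_trivial:
  assumes "a \<in> A" "a \<noteq> \<one>\<^bsub>AutT\<^esub>" "\<And>k. a \<in> (SigmaS x0 A S ^^ k) {a}"
  shows "\<not> eventually_trivial x0 A S"
proof
  assume "eventually_trivial x0 A S"
  then obtain n where "\<forall>m>n. (SigmaS x0 A S ^^ m) {a} \<subseteq> {\<one>\<^bsub>AutT\<^esub>}"
    using assms(1) unfolding eventually_trivial_def by blast
  then have "(SigmaS x0 A S ^^ Suc n) {a} \<subseteq> {\<one>\<^bsub>AutT\<^esub>}" using lessI by blast
  then show False using assms(2,3) by blast
qed

theorem mainTheorem17:
  fixes x0 :: "'x::finite"
    and A B :: "('x list \<Rightarrow> 'x list) set"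
    and a :: "'x list \<Rightarrow> 'x list"
  assumes cs: "CS_group x0 A B"
    and card2: "card (UNIV :: 'x set) \<ge> 2"
    and perfect: "derived AutT A = A"
    and aA: "a \<in> A"
    and atrans: "\<forall>x y. \<exists>n::int. lact x (a [^]\<^bsub>AutT\<^esub> n) = y"
  shows "\<not> orbitwise_abelian x0 A B \<and>
    (\<forall>S. S \<subseteq> B \<and> generate AutT S = B \<longrightarrow>
        \<not> eventually_trivial x0 A S \<and>
        A \<subseteq> sigmaS x0 A S a x0 \<and>
        (\<forall>k\<ge>1. a \<in> (SigmaS x0 A S ^^ k) {a}))"
proof (intro conjI allI impI)
  have trans: "\<forall>y. \<exists>n::int. lact x0 (a [^]\<^bsub>AutT\<^esub> n) = y" using atrans by blast
  have a1: "a \<noteq> \<one>\<^bsub>AutT\<^esub>" using card2 trans by (rule transitive_element_ne_one)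
  show "\<not> orbitwise_abelian x0 A B" using cs perfect aA a1 trans by (rule not_orbitwise_abelian)
  fix S assume "S \<subseteq> B \<and> generate AutT S = B"
  then have "derived AutT (HS x0 A S a x0) = A"
    using HS_self_transitive[OF cs _ aA trans] perfect by simp
  then show sigma: "A \<subseteq> sigmaS x0 A S a x0" using derived_HS_subset_sigmaS[of x0 A S a x0] by simp
  show iterate: "a \<in> (SigmaS x0 A S ^^ k) {a}" for k
    by (rule mem_SigmaS_iterate, rule subsetD[OF sigma aA])
  show "\<not> eventually_trivial x0 A S" using aA a1 iterate by (rule recurrent_not_eventually_trivial)
qed

end
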